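(* Let $q$ be a prime power and $n,t,m$ positive integers with $t\geq m$. Let $\ell$ be a positive integer such that $$ {\ell+s\choose t}\left(\frac{m}{q}\right)^{n}<s+1 $$ for some integer $s\geq 0$. Then $EGZ(t,\mathbb{F}_q^{n},m) > \ell$.
   Context: $\mathbb{F}_q^n$ is viewed as a commutative ring with coordinatewise operations. For elements $g_1,\dots,g_t$ of a commutative ring $R$, $e_m(g_1,\dots,g_t)=\sum_{1\leq i_1<\cdots<i_m\leq t}\prod_{j=1}^m g_{i_j}$. A sequence over $R$ is a finite list of elements of $R$ (repetitions allowed); a subsequence of length $t$ is obtained by choosing $t$ distinct positions. For a finite commutative ring $R$, $EGZ(t,R,m)$ is the smallest positive integer $\ell$ such that every sequence $S$ over $R$ of length $|S|\geq \ell$ contains a subsequence $S'$ of length $t$ with $e_m(S')=0$ in $R$; if no such $\ell$ exists, $EGZ(t,R,m)=\infty$. *)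

theory Defs
  imports "HOL-Analysis.Analysis" "HOL-Library.Extended_Nat"
begin

definition esym_pos :: "nat \<Rightarrow> 'r::comm_ring_1 list \<Rightarrow> nat set \<Rightarrow> 'r" where
  "esym_pos m S I = (\<Sum>J\<in>{J. J \<subseteq> I \<and> card J = m}. \<Prod>j\<in>J. S ! j)"

definition EGZ_prop :: "nat \<Rightarrow> 'r::comm_ring_1 itself \<Rightarrow> nat \<Rightarrow> nat \<Rightarrow> bool" where
  "EGZ_prop t R m L \<longleftrightarrow>
     (\<forall>S :: 'r list. length S \<ge> L \<longrightarrow>
        (\<exists>I. I \<subseteq> {..<length S} \<and> card I = t \<and> esym_pos m S I = 0))"

definition EGZ :: "nat \<Rightarrow> 'r::comm_ring_1 itself \<Rightarrow> nat \<Rightarrow> enat" where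
  "EGZ t R m = (if \<exists>L>0. EGZ_prop t R m L
                then enat (LEAST L. L > 0 \<and> EGZ_prop t R m L) else \<infinity>)"

end

theory Submission
  imports Defs
begin

(* First-moment argument. For a fixed set I of t positions, e_m of t independent uniform
   elements of F_q vanishes with probability at most m/q: e_m is affine in each variable,
   with slope e_(m-1), which gives a Schwartz-Zippel type bound by induction on I. The n
   coordinates of F_q^n are independent, so for a uniform sequence of length l + s the
   expected number of t-sets I with e_m(S_I) = 0 is at most C(l+s,t) (m/q)^n < s + 1.
   Some sequence thus has at most s such sets; deleting one position from each leaves a
   sequence of length at least l without any, so EGZ > l. The prime-power hypothesis only
   guarantees that F_q exists, which the field type already does. *)

definition esym :: "nat \<Rightarrow> ('b \<Rightarrow> 'a::comm_ring_1) \<Rightarrow> 'b set \<Rightarrow> 'a" where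
  "esym m g I = (\<Sum>J | J \<subseteq> I \<and> card J = m. \<Prod>j\<in>J. g j)"

lemma esym_pos_conv_esym: "esym_pos m S I = esym m ((!) S) I"
  by (simp add: esym_pos_def esym_def)

lemma esym_0: "finite I \<Longrightarrow> esym 0 g I = 1"
  by (simp add: esym_def card_eq_0_iff finite_subset cong: conj_cong)

lemma esym_cong: "(\<And>x. x \<in> I \<Longrightarrow> g x = g' x) \<Longrightarrow> esym m g I = esym m g' I"
  unfolding esym_def by (intro sum.cong refl prod.cong) auto

lemma esym_insert:
  assumes "finite I" "a \<notin> I"
  shows "esym (Suc k) g (insert a I) = g a * esym k g I + esym (Suc k) g I"
proof -
  let ?Sub = "\<lambda>k. {J. J \<subseteq> I \<and> card J = k}"
  have fin: "finite (?Sub k)" for k using assms(1) by simp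
  have card_ins: "card (insert a J) = Suc (card J)" if "J \<subseteq> I" for J
    using that assms finite_subset by (metis card_insert_disjoint subsetD)
  have split: "{J. J \<subseteq> insert a I \<and> card J = Suc k} = ?Sub (Suc k) \<union> insert a ` ?Sub k"
    unfolding subset_insert_lemma using card_ins by auto
  have disj: "?Sub (Suc k) \<inter> insert a ` ?Sub k = {}"
    using assms(2) by auto
  have inj: "inj_on (insert a) (?Sub k)"
    using assms(2) by (intro inj_onI) (metis insert_ident mem_Collect_eq subset_iff)
  have "esym (Suc k) g (insert a I) = esym (Suc k) g I + (\<Sum>J\<in>?Sub k. \<Prod>j\<in>insert a J. g j)"
    unfolding esym_def split
    by (simp add: sum.union_disjoint[OF fin _ disj] sum.reindex[OF inj] fin)
  also have "(\<Sum>J\<in>?Sub k. \<Prod>j\<in>insert a J. g j) = g a * esym k g I"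
    unfolding esym_def sum_distrib_left
    using assms by (intro sum.cong refl) (auto intro: prod.insert dest: finite_subset)
  finally show ?thesis by simp
qed

lemma esym_reindex:
  assumes "inj_on f I"
  shows "esym m (g \<circ> f) I = esym m g (f ` I)"
proof -
  have inj_sub: "inj_on f J" if "J \<subseteq> I" for J
    using assms that by (rule inj_on_subset)
  have subsets_image: "{J. J \<subseteq> f ` I \<and> card J = m} = image f ` {J. J \<subseteq> I \<and> card J = m}"
    by (auto simp: subset_image_iff card_image inj_sub)
  have inj: "inj_on (image f) {J. J \<subseteq> I \<and> card J = m}"
    by (rule inj_on_subset[OF inj_on_image_Pow[OF assms]]) auto
  show ?thesis
    unfolding esym_def subsets_image sum.reindex[OF inj]
    by (intro sum.cong refl) (auto simp: prod.reindex inj_sub)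
qed

lemma card_PiE_filter_insert:
  assumes "a \<notin> K" "finite K" "\<And>i. finite (T i)"
  shows "card {f \<in> Pi\<^sub>E (insert a K) T. P f}
           = (\<Sum>g\<in>Pi\<^sub>E K T. card {y \<in> T a. P (g(a := y))})"
proof -
  let ?upd = "\<lambda>(g, y). g(a := y)"
  let ?fibres = "SIGMA g:Pi\<^sub>E K T. {y \<in> T a. P (g(a := y))}"
  have inj: "inj_on ?upd (Pi\<^sub>E K T \<times> T a)"
  proof (intro inj_onI, clarify)
    fix g y g' y'
    assume "g \<in> Pi\<^sub>E K T" "g' \<in> Pi\<^sub>E K T" and eq: "g(a := y) = g'(a := y')"
    then have "g a = g' a"
      using assms(1) by (metis PiE_arb)
    then have "g = g'"
      using eq by (metis fun_upd_triv fun_upd_upd)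
    moreover have "y = y'"
      using fun_cong[OF eq, of a] by simp
    ultimately show "g = g' \<and> y = y'" ..
  qed
  have "Pi\<^sub>E (insert a K) T = ?upd ` (Pi\<^sub>E K T \<times> T a)"
  proof -
    have "?upd ` (Pi\<^sub>E K T \<times> T a) = ?upd ` prod.swap ` (T a \<times> Pi\<^sub>E K T)"
      by (simp only: product_swap)
    also have "\<dots> = (\<lambda>(y, g). g(a := y)) ` (T a \<times> Pi\<^sub>E K T)"
      unfolding image_image by (simp add: case_prod_beta)
    finally show ?thesis
      unfolding PiE_insert_eq by simp
  qed
  then have "{f \<in> Pi\<^sub>E (insert a K) T. P f} = ?upd ` ?fibres"
    by auto
  also have "card \<dots> = card ?fibres"
    by (rule card_image, rule inj_on_subset[OF inj]) auto
  also have "\<dots> = (\<Sum>g\<in>Pi\<^sub>E K T. card {y \<in> T a. P (g(a := y))})"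
    using assms(2,3) by (simp add: finite_PiE)
  finally show ?thesis .
qed

lemma card_affine_zeros_le:
  fixes A B :: "'a::{field,finite}"
  shows "card {y. y * A + B = 0} \<le> (if A = 0 then CARD('a) else 1)"
proof (cases "A = 0")
  case True
  then show ?thesis by (simp add: card_mono)
next
  case False
  then have "{y. y * A + B = 0} = {- B / A}"
    by (auto simp: field_simps eq_neg_iff_add_eq_0)
  then show ?thesis using False by simp
qed

lemma card_esym_zeros_le:
  fixes I K :: "'b set"
  assumes "finite K" "I \<subseteq> K" "0 < m" "m \<le> card I"
  shows "card {g \<in> K \<rightarrow>\<^sub>E (UNIV :: 'a::{field,finite} set). esym m g I = 0}
           \<le> m * CARD('a) ^ (card K - 1)"
  using finite_subset[OF assms(2,1)] assms
proof (induction I arbitrary: K m rule: finite_induct)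
  case empty
  then show ?case by simp
next
  case (insert a I)
  obtain k where m: "m = Suc k"
    using insert.prems(3) gr0_implies_Suc by blast
  define K' where "K' = K - {a}"
  have K: "K = insert a K'" "a \<notin> K'" "finite K'" "I \<subseteq> K'"
    using insert by (auto simp: K'_def)
  let ?q = "CARD('a)" and ?Pi = "K' \<rightarrow>\<^sub>E (UNIV :: 'a set)"
  let ?Zeros = "{g \<in> K \<rightarrow>\<^sub>E (UNIV :: 'a set). esym m g (insert a I) = 0}"
  let ?Z = "{g \<in> ?Pi. esym k g I = 0}"
  have upd: "esym j (g(a := y)) I = esym j g I" for j g y
    using insert.hyps(2) by (intro esym_cong) auto
  have "card ?Zeros = (\<Sum>g\<in>?Pi. card {y. esym m (g(a := y)) (insert a I) = 0})"
    unfolding K(1) by (subst card_PiE_filter_insert) (use K in auto)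
  also have "\<dots> = (\<Sum>g\<in>?Pi. card {y. y * esym k g I + esym m g I = 0})"
    unfolding m esym_insert[OF insert.hyps] upd by (simp add: mult.commute)
  also have "\<dots> \<le> (\<Sum>g\<in>?Pi. if esym k g I = 0 then ?q else 1)"
    by (rule sum_mono, rule card_affine_zeros_le)
  also have "\<dots> = ?q * card ?Z + card {g \<in> ?Pi. esym k g I \<noteq> 0}"
    using K(3) by (simp add: sum.If_cases finite_PiE Int_def)
  also have "\<dots> \<le> ?q * card ?Z + ?q ^ card K'"
    using K(3) card_mono[of ?Pi "{g \<in> ?Pi. esym k g I \<noteq> 0}"]
    by (simp add: finite_PiE card_PiE)
  finally have main: "card ?Zeros \<le> ?q * card ?Z + ?q ^ card K'" .
  show ?case
  proof (cases "k = 0")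
    case True
    then have "card ?Z = 0"
      by (simp add: esym_0[OF insert.hyps(1)])
    then show ?thesis
      using main m K True by simp
  next
    case False
    have "k \<le> card I"
      using insert.hyps insert.prems m by simp
    then have IH: "card ?Z \<le> k * ?q ^ (card K' - 1)"
      using insert.IH[of K' k] False K by simp
    have "card K' \<noteq> 0"
      using \<open>k \<le> card I\<close> False card_mono[OF K(3,4)] by linarith
    then have pow: "?q * ?q ^ (card K' - 1) = ?q ^ card K'"
      by (simp add: power_eq_if)
    have "card ?Zeros \<le> ?q * (k * ?q ^ (card K' - 1)) + ?q ^ card K'"
      using main IH by (meson add_le_mono1 mult_le_mono2 order_trans)
    also have "\<dots> = m * ?q ^ (card K - 1)"
      using m K by (simp add: pow[symmetric] algebra_simps)
    finally show ?thesis .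
  qed
qed

lemma prod_component: "(\<Prod>x\<in>A. f x) $ i = (\<Prod>x\<in>A. f x $ i)"
  for f :: "'b \<Rightarrow> 'a::comm_ring_1 ^ 'n"
  by (induction A rule: infinite_finite_induct) auto

lemma esym_component: "esym m g I $ k = esym m (\<lambda>j. g j $ k) I"
  by (simp add: esym_def prod_component)

(* A sequence of N vectors of 'a ^ 'n stored by coordinates: h k j is the k-th coordinate
   of the j-th term. The zero count then factors over the coordinates. *)
definition coord_seqs :: "nat \<Rightarrow> ('n \<Rightarrow> nat \<Rightarrow> 'a) set" where
  "coord_seqs N = UNIV \<rightarrow>\<^sub>E {..<N} \<rightarrow>\<^sub>E UNIV"

definition seq_of_coords :: "nat \<Rightarrow> ('n::finite \<Rightarrow> nat \<Rightarrow> 'a) \<Rightarrow> ('a ^ 'n) list" where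
  "seq_of_coords N h = map (\<lambda>j. \<chi> k. h k j) [0..<N]"

lemma length_seq_of_coords [simp]: "length (seq_of_coords N h) = N"
  by (simp add: seq_of_coords_def)

lemma card_coord_seqs:
  "card (coord_seqs N :: ('n::finite \<Rightarrow> nat \<Rightarrow> 'a::finite) set) = (CARD('a) ^ N) ^ CARD('n)"
  by (simp add: coord_seqs_def card_PiE)

lemma esym_pos_seq_of_coords:
  assumes "I \<subseteq> {..<N}"
  shows "esym_pos m (seq_of_coords N h) I = (\<chi> k. esym m (h k) I)"
proof -
  have "esym_pos m (seq_of_coords N h) I $ k = esym m (h k) I" for k
    unfolding esym_pos_conv_esym esym_component
    using assms by (intro esym_cong) (auto simp: seq_of_coords_def)
  then show ?thesis
    by (simp add: vec_eq_iff)
qed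

lemma card_coord_seqs_esym_zero_le:
  assumes "I \<subseteq> {..<N}" "0 < m" "m \<le> card I"
  shows "card {h \<in> coord_seqs N :: ('n::finite \<Rightarrow> nat \<Rightarrow> 'a::{field,finite}) set.
                 esym_pos m (seq_of_coords N h) I = 0}
           \<le> (m * CARD('a) ^ (N - 1)) ^ CARD('n)"
proof -
  let ?Z = "{g \<in> {..<N} \<rightarrow>\<^sub>E (UNIV :: 'a set). esym m g I = 0}"
  have "{h \<in> coord_seqs N :: ('n \<Rightarrow> nat \<Rightarrow> 'a) set. esym_pos m (seq_of_coords N h) I = 0}
      = UNIV \<rightarrow>\<^sub>E ?Z"
    by (auto simp: coord_seqs_def esym_pos_seq_of_coords[OF assms(1)] vec_eq_iff PiE_iff)
  moreover have "card ?Z \<le> m * CARD('a) ^ (N - 1)"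
    using card_esym_zeros_le[of "{..<N}" I m] assms by simp
  ultimately show ?thesis
    by (simp add: card_PiE power_mono)
qed

definition zero_esym_subsets :: "nat \<Rightarrow> nat \<Rightarrow> 'r::comm_ring_1 list \<Rightarrow> nat set set" where
  "zero_esym_subsets t m S = {I. I \<subseteq> {..<length S} \<and> card I = t \<and> esym_pos m S I = 0}"

lemma finite_zero_esym_subsets: "finite (zero_esym_subsets t m S)"
  unfolding zero_esym_subsets_def by (rule finite_subset[of _ "Pow {..<length S}"]) auto

lemma ex_seq_few_zero_esym_subsets:
  fixes N s t m :: nat
  assumes "0 < N" "0 < m" "m \<le> t"
    and "real (N choose t) * (real m / real CARD('a)) ^ CARD('n) < real s + 1"
  shows "\<exists>S :: ('a::{field,finite} ^ 'n::finite) list.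
           length S = N \<and> card (zero_esym_subsets t m S) \<le> s"
proof (rule ccontr)
  let ?H = "coord_seqs N :: ('n \<Rightarrow> nat \<Rightarrow> 'a) set"
  let ?T = "{I. I \<subseteq> {..<N} \<and> card I = t}"
  let ?zero = "\<lambda>h I. esym_pos m (seq_of_coords N h) I = 0"
  let ?q = "CARD('a)" and ?n = "CARD('n)"
  assume "\<not> ?thesis"
  then have "\<not> card (zero_esym_subsets t m (seq_of_coords N h)) \<le> s"
    for h :: "'n \<Rightarrow> nat \<Rightarrow> 'a"
    by simp
  then have many: "s + 1 \<le> card {I \<in> ?T. ?zero h I}" for h :: "'n \<Rightarrow> nat \<Rightarrow> 'a"
    by (simp add: zero_esym_subsets_def conj_assoc not_le Suc_le_eq)
  have fin: "finite ?H" "finite ?T"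
    by (simp_all add: coord_seqs_def finite_PiE)
  have "card ?H * (s + 1) \<le> (\<Sum>h\<in>?H. card {I \<in> ?T. ?zero h I})"
    using sum_bounded_below[of ?H "s + 1"] many by simp
  also have "\<dots> = (\<Sum>I\<in>?T. card {h \<in> ?H. ?zero h I})"
    using fin by (rule sum_multicount_gen) simp
  also have "\<dots> \<le> (\<Sum>I\<in>?T. (m * ?q ^ (N - 1)) ^ ?n)"
    using assms(2,3) by (intro sum_mono card_coord_seqs_esym_zero_le) auto
  also have "\<dots> = (N choose t) * m ^ ?n * (?q ^ (N - 1)) ^ ?n"
    by (simp add: n_subsets power_mult_distrib)
  finally have "card ?H * (s + 1) \<le> (N choose t) * m ^ ?n * (?q ^ (N - 1)) ^ ?n" .
  moreover have "?q ^ N = ?q * ?q ^ (N - 1)"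
    using assms(1) by (simp add: power_eq_if)
  then have "card ?H = ?q ^ ?n * (?q ^ (N - 1)) ^ ?n"
    by (simp add: card_coord_seqs power_mult_distrib)
  ultimately have "((s + 1) * ?q ^ ?n) * (?q ^ (N - 1)) ^ ?n
                    \<le> ((N choose t) * m ^ ?n) * (?q ^ (N - 1)) ^ ?n"
    by (simp only: ac_simps)
  then have "(s + 1) * ?q ^ ?n \<le> (N choose t) * m ^ ?n"
    by simp
  then have "real (s + 1) * real ?q ^ ?n \<le> real (N choose t) * real m ^ ?n"
    by (metis of_nat_le_iff of_nat_mult of_nat_power)
  then show False
    using assms(4) by (simp add: power_divide field_simps)
qed

lemma ex_hitting_set:
  assumes "finite F" "{} \<notin> F"
  shows "\<exists>D. finite D \<and> card D \<le> card F \<and> (\<forall>X\<in>F. D \<inter> X \<noteq> {})"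
proof (intro exI conjI)
  let ?D = "(\<lambda>X. SOME x. x \<in> X) ` F"
  show "finite ?D" "card ?D \<le> card F"
    using assms(1) by (simp_all add: card_image_le)
  show "\<forall>X\<in>F. ?D \<inter> X \<noteq> {}"
  proof
    fix X
    assume "X \<in> F"
    then have "(SOME x. x \<in> X) \<in> ?D \<inter> X"
      using assms(2) by (auto simp: some_in_eq)
    then show "?D \<inter> X \<noteq> {}"
      by blast
  qed
qed

lemma esym_pos_map_nth:
  assumes "inj_on f I" "I \<subseteq> {..<n}"
  shows "esym_pos m (map (\<lambda>j. S ! f j) [0..<n]) I = esym_pos m S (f ` I)"
proof -
  have "esym_pos m (map (\<lambda>j. S ! f j) [0..<n]) I = esym m ((!) S \<circ> f) I"
    unfolding esym_pos_conv_esym using assms(2) by (intro esym_cong) auto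
  also have "\<dots> = esym_pos m S (f ` I)"
    unfolding esym_pos_conv_esym by (rule esym_reindex[OF assms(1)])
  finally show ?thesis .
qed

lemma ex_sublist_no_zero_esym_subsets:
  fixes S :: "'r::comm_ring_1 list"
  assumes "0 < t"
  shows "\<exists>S' :: 'r list.
           length S - card (zero_esym_subsets t m S) \<le> length S' \<and> zero_esym_subsets t m S' = {}"
proof -
  let ?Z = "zero_esym_subsets t m S"
  obtain D where D: "finite D" "card D \<le> card ?Z" "\<And>I. I \<in> ?Z \<Longrightarrow> D \<inter> I \<noteq> {}"
    using ex_hitting_set[OF finite_zero_esym_subsets, of t m S] assms
    by (auto simp: zero_esym_subsets_def)
  define P where "P = {..<length S} - D"
  obtain f where f: "bij_betw f {..<card P} P"
    using ex_bij_betw_nat_finite[of P] by (auto simp: P_def atLeast0LessThan)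
  define S' where "S' = map (\<lambda>j. S ! f j) [0..<card P]"
  have "card ({..<length S} \<inter> D) \<le> card ?Z"
    using card_mono[OF D(1), of "{..<length S} \<inter> D"] D(2) by simp
  then have "length S - card ?Z \<le> card P"
    unfolding P_def by (simp add: card_Diff_subset_Int diff_le_mono2)
  moreover have "I \<notin> zero_esym_subsets t m S'" for I
  proof
    assume I: "I \<in> zero_esym_subsets t m S'"
    then have I_sub: "I \<subseteq> {..<card P}"
      by (simp add: zero_esym_subsets_def S'_def)
    have inj: "inj_on f I"
      using bij_betw_imp_inj_on[OF f] I_sub by (rule inj_on_subset)
    have fI_sub: "f ` I \<subseteq> P"
      using bij_betw_imp_surj_on[OF f] I_sub by blast
    have "f ` I \<in> ?Z"
      using I inj fI_sub esym_pos_map_nth[OF inj I_sub, of m S]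
      by (auto simp: zero_esym_subsets_def S'_def P_def card_image)
    then show False
      using D(3) fI_sub by (auto simp: P_def)
  qed
  moreover have "length S' = card P"
    by (simp add: S'_def)
  ultimately have "length S - card ?Z \<le> length S'" "zero_esym_subsets t m S' = {}"
    by auto
  then show ?thesis
    by blast
qed

lemma EGZ_greater:
  fixes S :: "'r::comm_ring_1 list"
  assumes "l \<le> length S" "zero_esym_subsets t m S = {}"
  shows "enat l < EGZ t TYPE('r) m"
proof -
  have no_prop: "\<not> EGZ_prop t TYPE('r) m L" if "L \<le> l" for L
  proof
    assume "EGZ_prop t TYPE('r) m L"
    then have "\<exists>I. I \<subseteq> {..<length S} \<and> card I = t \<and> esym_pos m S I = 0"
      unfolding EGZ_prop_def using assms(1) that le_trans by blast
    with assms(2) show False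
      unfolding zero_esym_subsets_def by blast
  qed
  show ?thesis
  proof (cases "\<exists>L>0. EGZ_prop t TYPE('r) m L")
    case True
    then have "EGZ_prop t TYPE('r) m (LEAST L. L > 0 \<and> EGZ_prop t TYPE('r) m L)"
      by (metis (mono_tags, lifting) LeastI_ex)
    then have "l < (LEAST L. L > 0 \<and> EGZ_prop t TYPE('r) m L)"
      using no_prop not_le by blast
    then show ?thesis
      using True by (simp add: EGZ_def)
  next
    case False
    then show ?thesis
      unfolding EGZ_def if_not_P[OF False] by simp
  qed
qed

theorem theorem2p5:
  fixes q n t m l :: nat
  assumes "CARD('a::{field,finite}) = q"
    and "CARD('n::finite) = n"
    and "\<exists>p k. prime p \<and> k > 0 \<and> q = p ^ k"
    and "n > 0" and "t > 0" and "m > 0" and "t \<ge> m" and "l > 0"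
    and "\<exists>s::nat. real ((l + s) choose t) * (real m / real q) ^ n < real s + 1"
  shows "EGZ t TYPE('a ^ 'n) m > enat l"
proof -
  obtain s :: nat where s: "real ((l + s) choose t) * (real m / real q) ^ n < real s + 1"
    using assms(9) by blast
  obtain S :: "('a ^ 'n) list" where S: "length S = l + s" "card (zero_esym_subsets t m S) \<le> s"
    using ex_seq_few_zero_esym_subsets[of "l + s" m t s] s assms by auto
  then have "l \<le> length S - card (zero_esym_subsets t m S)"
    by simp
  then obtain S' :: "('a ^ 'n) list" where "l \<le> length S'" "zero_esym_subsets t m S' = {}"
    using ex_sublist_no_zero_esym_subsets[OF assms(5), of S m] le_trans by blast
  then show ?thesis
    by (rule EGZ_greater)
qed

end
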